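(* In the $\mathbf N$-agent system described in the context, let $\{\boldsymbol\mu_t^{\mathbf N},\boldsymbol\nu_t^{\mathbf N}\}_{t\ge0}$ be the empirical joint state and action distributions induced by a policy $\boldsymbol\pi=\{\boldsymbol\pi_t\}_{t\ge0}$. Then for every $t\ge0$, $$\mathbb E\Big|\frac1{N_{\mathrm{pop}}}\sum_{k\in[K]}\sum_{j=1}^{N_k}r_k(x_{j,k}^t,u_{j,k}^t,\boldsymbol\mu_t^{\mathbf N},\boldsymbol\nu_t^{\mathbf N})-\sum_{k\in[K]}r_k^{\mathrm{MF}}(\boldsymbol\mu_t^{\mathbf N},\boldsymbol\pi_t)\Big|\le C_R\sqrt{|\mathcal U|}\frac1{N_{\mathrm{pop}}}\Big(\sum_{k\in[K]}\sqrt{N_k}\Big),$$ where $C_R=M_R+L_R$.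
   Context: Fix $K\ge1$, $N_1,\dots,N_K\ge1$, $[K]=\{1,\dots,K\}$, $N_{\mathrm{pop}}=\sum_kN_k$, finite sets $\mathcal X,\mathcal U$, $\mathcal P(A)$ the probability distributions on $A$, $|\cdot|_1$ the $L_1$ norm, constants $M_R,L_R,L_P>0$. Agent $j\in[N_k]$ of class $k$ has state $x_{j,k}^t$ and action $u_{j,k}^t$; $\boldsymbol\mu_t^{\mathbf N}(x,k)=\frac1{N_{\mathrm{pop}}}\sum_{j=1}^{N_k}\mathbf 1(x_{j,k}^t=x)$, $\boldsymbol\nu_t^{\mathbf N}(u,k)=\frac1{N_{\mathrm{pop}}}\sum_{j=1}^{N_k}\mathbf 1(u_{j,k}^t=u)$. For each $k$, $r_k:\mathcal X\times\mathcal U\times\mathcal P(\mathcal X\times[K])\times\mathcal P(\mathcal U\times[K])\to\mathbb R$ and $P_k:\mathcal X\times\mathcal U\times\mathcal P(\mathcal X\times[K])\times\mathcal P(\mathcal U\times[K])\to\mathcal P(\mathcal X)$ satisfy $|r_k|\le M_R$, $|r_k(x,u,\boldsymbol\mu_1,\boldsymbol\nu_1)-r_k(x,u,\boldsymbol\mu_2,\boldsymbol\nu_2)|\le L_R(|\boldsymbol\mu_1-\boldsymbol\mu_2|_1+|\boldsymbol\nu_1-\boldsymbol\nu_2|_1)$, $|P_k(x,u,\boldsymbol\mu_1,\boldsymbol\nu_1)-P_k(x,u,\boldsymbol\mu_2,\boldsymbol\nu_2)|_1\le L_P(|\boldsymbol\mu_1-\boldsymbol\mu_2|_1+|\boldsymbol\nu_1-\boldsymbol\nu_2|_1)$.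 A policy is $\boldsymbol\pi=\{\boldsymbol\pi_t\}_{t\ge0}$, $\boldsymbol\pi_t=(\pi_k^t)_k$, $\pi_k^t:\mathcal X\times\mathcal P(\mathcal X\times[K])\to\mathcal P(\mathcal U)$. Dynamics: conditioned on all states at time $t$, actions are independent across agents with $u_{j,k}^t\sim\pi_k^t(x_{j,k}^t,\boldsymbol\mu_t^{\mathbf N})$; conditioned on states and actions, next states are independent with $x_{j,k}^{t+1}\sim P_k(x_{j,k}^t,u_{j,k}^t,\boldsymbol\mu_t^{\mathbf N},\boldsymbol\nu_t^{\mathbf N})$. Mean-field: $\nu^{\mathrm{MF}}(\boldsymbol\mu,\boldsymbol\pi)(u,k)=\sum_x\pi_k(x,\boldsymbol\mu)(u)\boldsymbol\mu(x,k)$, $r_k^{\mathrm{MF}}(\boldsymbol\mu,\boldsymbol\pi)=\sum_{x,u}\boldsymbol\mu(x,k)\pi_k(x,\boldsymbol\mu)(u)r_k(x,u,\boldsymbol\mu,\nu^{\mathrm{MF}}(\boldsymbol\mu,\boldsymbol\pi))$. *)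

theory Defs
  imports "HOL-Probability.Probability"
begin

text \<open>Classes are 1..K; agent (j,k) with k in 1..K and j in 1..N k.
  A distribution on X x [K] is a function mu :: 'x => nat => real (mu x k).\<close>

definition agents :: "nat \<Rightarrow> (nat \<Rightarrow> nat) \<Rightarrow> (nat \<times> nat) set" where
  "agents K N = {(j, k). k \<in> {1..K} \<and> j \<in> {1..N k}}"

definition Npop :: "nat \<Rightarrow> (nat \<Rightarrow> nat) \<Rightarrow> nat" where
  "Npop K N = (\<Sum>k=1..K. N k)"

definition is_dist :: "nat \<Rightarrow> ('a::finite \<Rightarrow> nat \<Rightarrow> real) \<Rightarrow> bool" where
  "is_dist K m \<longleftrightarrow> (\<forall>a k. 0 \<le> m a k) \<and> (\<forall>a k. k \<notin> {1..K} \<longrightarrow> m a k = 0)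
     \<and> (\<Sum>a\<in>UNIV. \<Sum>k=1..K. m a k) = 1"

definition dist1 :: "nat \<Rightarrow> ('a::finite \<Rightarrow> nat \<Rightarrow> real) \<Rightarrow> ('a \<Rightarrow> nat \<Rightarrow> real) \<Rightarrow> real" where
  "dist1 K m1 m2 = (\<Sum>a\<in>UNIV. \<Sum>k=1..K. \<bar>m1 a k - m2 a k\<bar>)"

definition pmf_dist1 :: "'a::finite pmf \<Rightarrow> 'a pmf \<Rightarrow> real" where
  "pmf_dist1 p q = (\<Sum>a\<in>UNIV. \<bar>pmf p a - pmf q a\<bar>)"

definition emp :: "nat \<Rightarrow> (nat \<Rightarrow> nat) \<Rightarrow> (nat \<times> nat \<Rightarrow> 'a) \<Rightarrow> 'a \<Rightarrow> nat \<Rightarrow> real" where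
  "emp K N s a k = (if k \<in> {1..K}
      then real (card {j \<in> {1..N k}. s (j, k) = a}) / real (Npop K N) else 0)"

definition action_law ::
  "nat \<Rightarrow> (nat \<Rightarrow> nat) \<Rightarrow> (nat \<Rightarrow> nat \<Rightarrow> 'x \<Rightarrow> ('x \<Rightarrow> nat \<Rightarrow> real) \<Rightarrow> 'u pmf)
   \<Rightarrow> nat \<Rightarrow> (nat \<times> nat \<Rightarrow> 'x) \<Rightarrow> (nat \<times> nat \<Rightarrow> 'u) pmf" where
  "action_law K N pol t s =
     Pi_pmf (agents K N) undefined (\<lambda>(j, k). pol t k (s (j, k)) (emp K N s))"

definition next_law ::
  "nat \<Rightarrow> (nat \<Rightarrow> nat) \<Rightarrow> (nat \<Rightarrow> 'x \<Rightarrow> 'u \<Rightarrow> ('x \<Rightarrow> nat \<Rightarrow> real) \<Rightarrow> ('u \<Rightarrow> nat \<Rightarrow> real) \<Rightarrow> 'x pmf)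
   \<Rightarrow> (nat \<times> nat \<Rightarrow> 'x) \<Rightarrow> (nat \<times> nat \<Rightarrow> 'u) \<Rightarrow> (nat \<times> nat \<Rightarrow> 'x) pmf" where
  "next_law K N P s a =
     Pi_pmf (agents K N) undefined (\<lambda>(j, k). P k (s (j, k)) (a (j, k)) (emp K N s) (emp K N a))"

primrec state_law ::
  "nat \<Rightarrow> (nat \<Rightarrow> nat) \<Rightarrow> (nat \<Rightarrow> nat \<Rightarrow> 'x \<Rightarrow> ('x \<Rightarrow> nat \<Rightarrow> real) \<Rightarrow> 'u pmf)
   \<Rightarrow> (nat \<Rightarrow> 'x \<Rightarrow> 'u \<Rightarrow> ('x \<Rightarrow> nat \<Rightarrow> real) \<Rightarrow> ('u \<Rightarrow> nat \<Rightarrow> real) \<Rightarrow> 'x pmf)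
   \<Rightarrow> (nat \<times> nat \<Rightarrow> 'x) pmf \<Rightarrow> nat \<Rightarrow> (nat \<times> nat \<Rightarrow> 'x) pmf" where
  "state_law K N pol P init 0 = init"
| "state_law K N pol P init (Suc t) =
     bind_pmf (state_law K N pol P init t)
       (\<lambda>s. bind_pmf (action_law K N pol t s) (\<lambda>a. next_law K N P s a))"

definition sa_law ::
  "nat \<Rightarrow> (nat \<Rightarrow> nat) \<Rightarrow> (nat \<Rightarrow> nat \<Rightarrow> 'x \<Rightarrow> ('x \<Rightarrow> nat \<Rightarrow> real) \<Rightarrow> 'u pmf)
   \<Rightarrow> (nat \<Rightarrow> 'x \<Rightarrow> 'u \<Rightarrow> ('x \<Rightarrow> nat \<Rightarrow> real) \<Rightarrow> ('u \<Rightarrow> nat \<Rightarrow> real) \<Rightarrow> 'x pmf)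
   \<Rightarrow> (nat \<times> nat \<Rightarrow> 'x) pmf \<Rightarrow> nat \<Rightarrow> ((nat \<times> nat \<Rightarrow> 'x) \<times> (nat \<times> nat \<Rightarrow> 'u)) pmf" where
  "sa_law K N pol P init t =
     bind_pmf (state_law K N pol P init t)
       (\<lambda>s. map_pmf (\<lambda>a. (s, a)) (action_law K N pol t s))"

definition nu_MF :: "('x::finite \<Rightarrow> nat \<Rightarrow> real) \<Rightarrow> (nat \<Rightarrow> 'x \<Rightarrow> ('x \<Rightarrow> nat \<Rightarrow> real) \<Rightarrow> 'u pmf)
   \<Rightarrow> 'u \<Rightarrow> nat \<Rightarrow> real" where
  "nu_MF mu pit u k = (\<Sum>x\<in>UNIV. pmf (pit k x mu) u * mu x k)"

definition r_MF :: "(nat \<Rightarrow> 'x::finite \<Rightarrow> 'u::finite \<Rightarrow> ('x \<Rightarrow> nat \<Rightarrow> real) \<Rightarrow> ('u \<Rightarrow> nat \<Rightarrow> real) \<Rightarrow> real)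
   \<Rightarrow> nat \<Rightarrow> ('x \<Rightarrow> nat \<Rightarrow> real) \<Rightarrow> (nat \<Rightarrow> 'x \<Rightarrow> ('x \<Rightarrow> nat \<Rightarrow> real) \<Rightarrow> 'u pmf) \<Rightarrow> real" where
  "r_MF r k mu pit = (\<Sum>x\<in>UNIV. \<Sum>u\<in>UNIV.
      mu x k * pmf (pit k x mu) u * r k x u mu (nu_MF mu pit))"

end

theory Submission
  imports Defs
begin

(*
  Condition on the states s.  The actions are then independent across agents, and the gap is at
  most L_R dist1 (emp a) nu + |sum_q (g_q (a_q) - E g_q)| / N_pop, where nu = nu_MF (emp s) pi_t is
  the mean of the empirical action distribution emp a and g_q is the reward of agent q with emp a
  replaced by nu.  Both terms are normalised centred sums of independent variables, so their mean
  absolute values are bounded by the square roots of their variances.  For each class k and action u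
  the deviation of emp a u k has mean at most sqrt (sum_j P (a_jk = u)) / N_pop, and Cauchy-Schwarz
  over u turns this into sqrt |U| sqrt N_k / N_pop; the reward term has mean at most
  M_R sqrt N_pop / N_pop, and sqrt N_pop <= sum_k sqrt N_k.  The bound is uniform in s, so it
  survives averaging over the law of the states.
*)

lemma finite_set_Pi_pmf:
  fixes p :: "'i \<Rightarrow> 'u::finite pmf"
  assumes "finite A"
  shows "finite (set_pmf (Pi_pmf A d p))"
  using assms by (simp add: set_Pi_pmf finite_PiE_dflt)

lemma expectation_eq_sum_UNIV:
  fixes p :: "'u::finite pmf" and f :: "'u \<Rightarrow> real"
  shows "measure_pmf.expectation p f = (\<Sum>u\<in>UNIV. f u * pmf p u)"
  by (rule integral_measure_pmf_real) auto

lemma expectation_pair_pmf_mult: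
  fixes g :: "'a \<Rightarrow> real" and h :: "'b \<Rightarrow> real"
  assumes "finite (set_pmf p)" and "finite (set_pmf q)"
  shows "measure_pmf.expectation (pair_pmf p q) (\<lambda>z. g (fst z) * h (snd z))
       = measure_pmf.expectation p g * measure_pmf.expectation q h"
proof -
  have "measure_pmf.expectation (pair_pmf p q) (\<lambda>z. g (fst z) * h (snd z))
      = (\<Sum>z\<in>set_pmf p \<times> set_pmf q. g (fst z) * h (snd z) * pmf (pair_pmf p q) z)"
    using assms by (intro integral_measure_pmf_real) auto
  also have "\<dots> = (\<Sum>a\<in>set_pmf p. g a * pmf p a) * (\<Sum>b\<in>set_pmf q. h b * pmf q b)"
  proof -
    have "pmf (pair_pmf p q) z = pmf p (fst z) * pmf q (snd z)" for z
      by (metis pmf_pair prod.collapse)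
    then show ?thesis
      by (simp add: sum.cartesian_product' sum_product mult_ac)
  qed
  also have "\<dots> = measure_pmf.expectation p g * measure_pmf.expectation q h"
    using assms by (simp add: integral_measure_pmf_real[where A = "set_pmf p"]
        integral_measure_pmf_real[where A = "set_pmf q"])
  finally show ?thesis .
qed

lemma expectation_Pi_pmf_sum_square:
  fixes p :: "'i \<Rightarrow> 'u::finite pmf" and g :: "'i \<Rightarrow> 'u \<Rightarrow> real"
  assumes "finite A" and "\<And>i. i \<in> A \<Longrightarrow> measure_pmf.expectation (p i) (g i) = 0"
  shows "measure_pmf.expectation (Pi_pmf A d p) (\<lambda>a. (\<Sum>i\<in>A. g i (a i))\<^sup>2)
       = (\<Sum>i\<in>A. measure_pmf.expectation (p i) (\<lambda>v. (g i v)\<^sup>2))"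
  using assms
proof (induction A rule: finite_induct)
  case empty
  then show ?case by simp
next
  case (insert x A)
  let ?Q = "pair_pmf (p x) (Pi_pmf A d p)"
  let ?S = "\<lambda>f. \<Sum>i\<in>A. g i (f i)"
  have finite_Q: "finite (set_pmf ?Q)"
    using insert.hyps by (simp add: finite_set_Pi_pmf)
  have sum_upd: "(\<Sum>i\<in>A. g i (if i = x then y else f i)) = ?S f" for f y
    using insert.hyps by (auto intro!: sum.cong)
  have "measure_pmf.expectation (Pi_pmf (insert x A) d p) (\<lambda>a. (\<Sum>i\<in>insert x A. g i (a i))\<^sup>2)
      = measure_pmf.expectation ?Q (\<lambda>z. (g x (fst z) + ?S (snd z))\<^sup>2)"
    using insert.hyps by (simp add: Pi_pmf_insert case_prod_unfold sum_upd)
  also have "\<dots> = measure_pmf.expectation ?Q (\<lambda>z. (g x (fst z))\<^sup>2)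
      + 2 * measure_pmf.expectation ?Q (\<lambda>z. g x (fst z) * ?S (snd z))
      + measure_pmf.expectation ?Q (\<lambda>z. (?S (snd z))\<^sup>2)"
    using finite_Q by (simp add: power2_sum integrable_measure_pmf_finite mult.assoc)
  also have "measure_pmf.expectation ?Q (\<lambda>z. g x (fst z) * ?S (snd z)) = 0"
    using expectation_pair_pmf_mult[of "p x" "Pi_pmf A d p" "g x" ?S]
      finite_set_Pi_pmf[OF insert.hyps(1), of d p] insert.prems
    by simp
  also have "measure_pmf.expectation ?Q (\<lambda>z. (g x (fst z))\<^sup>2)
      = measure_pmf.expectation (p x) (\<lambda>v. (g x v)\<^sup>2)"
    by (rule expectation_pair_pmf_fst)
  also have "measure_pmf.expectation ?Q (\<lambda>z. (?S (snd z))\<^sup>2)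
      = measure_pmf.expectation (Pi_pmf A d p) (\<lambda>a. (?S a)\<^sup>2)"
    by (rule expectation_pair_pmf_snd)
  finally show ?case
    using insert by simp
qed

lemma expectation_abs_le_sqrt_second_moment:
  fixes Z :: "'a \<Rightarrow> real"
  assumes "finite (set_pmf M)"
  shows "measure_pmf.expectation M (\<lambda>a. \<bar>Z a\<bar>) \<le> sqrt (measure_pmf.expectation M (\<lambda>a. (Z a)\<^sup>2))"
proof -
  have "0 \<le> measure_pmf.variance M (\<lambda>a. \<bar>Z a\<bar>)"
    by (rule measure_pmf.variance_positive)
  also have "\<dots> = measure_pmf.expectation M (\<lambda>a. (Z a)\<^sup>2) - (measure_pmf.expectation M (\<lambda>a. \<bar>Z a\<bar>))\<^sup>2"
    using assms by (subst measure_pmf.variance_eq) (auto simp: integrable_measure_pmf_finite)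
  finally show ?thesis
    by (intro real_le_rsqrt) simp
qed

lemma expectation_abs_centered_sum_Pi_pmf_le:
  fixes p :: "'i \<Rightarrow> 'u::finite pmf" and g :: "'i \<Rightarrow> 'u \<Rightarrow> real"
  assumes "finite A"
  shows "measure_pmf.expectation (Pi_pmf A d p)
           (\<lambda>a. \<bar>\<Sum>i\<in>A. g i (a i) - measure_pmf.expectation (p i) (g i)\<bar>)
       \<le> sqrt (\<Sum>i\<in>A. measure_pmf.expectation (p i) (\<lambda>v. (g i v)\<^sup>2))"
proof -
  define h where "h i v = g i v - measure_pmf.expectation (p i) (g i)" for i v
  have centered: "measure_pmf.expectation (p i) (h i) = 0" for i
    unfolding h_def by (simp add: integrable_measure_pmf_finite measure_pmf.prob_space)
  have second_moment: "measure_pmf.expectation (p i) (\<lambda>v. (h i v)\<^sup>2)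
      = measure_pmf.expectation (p i) (\<lambda>v. (g i v)\<^sup>2) - (measure_pmf.expectation (p i) (g i))\<^sup>2" for i
    unfolding h_def by (subst measure_pmf.variance_eq[symmetric])
      (auto simp: integrable_measure_pmf_finite)
  have "measure_pmf.expectation (Pi_pmf A d p) (\<lambda>a. \<bar>\<Sum>i\<in>A. h i (a i)\<bar>)
      \<le> sqrt (measure_pmf.expectation (Pi_pmf A d p) (\<lambda>a. (\<Sum>i\<in>A. h i (a i))\<^sup>2))"
    using assms by (intro expectation_abs_le_sqrt_second_moment finite_set_Pi_pmf)
  also have "\<dots> = sqrt (\<Sum>i\<in>A. measure_pmf.expectation (p i) (\<lambda>v. (h i v)\<^sup>2))"
    using assms centered by (simp add: expectation_Pi_pmf_sum_square)
  also have "\<dots> \<le> sqrt (\<Sum>i\<in>A. measure_pmf.expectation (p i) (\<lambda>v. (g i v)\<^sup>2))"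
    unfolding second_moment by (intro real_sqrt_le_mono sum_mono) simp
  finally show ?thesis
    by (simp add: h_def)
qed

lemma expectation_abs_centered_sum_Pi_pmf_bounded:
  fixes p :: "'i \<Rightarrow> 'u::finite pmf" and g :: "'i \<Rightarrow> 'u \<Rightarrow> real"
  assumes "finite A" and bound: "\<And>i v. i \<in> A \<Longrightarrow> \<bar>g i v\<bar> \<le> M"
  shows "measure_pmf.expectation (Pi_pmf A d p)
           (\<lambda>a. \<bar>\<Sum>i\<in>A. g i (a i) - measure_pmf.expectation (p i) (g i)\<bar>)
       \<le> M * sqrt (card A)"
proof (cases "A = {}")
  case False
  then have "0 \<le> M"
    using bound by (meson abs_ge_zero all_not_in_conv order.trans)
  have "measure_pmf.expectation (p i) (\<lambda>v. (g i v)\<^sup>2) \<le> M\<^sup>2" if "i \<in> A" for i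
  proof -
    have "(g i v)\<^sup>2 \<le> M\<^sup>2" for v
      using bound[OF that, of v] by (metis abs_ge_zero power2_abs power_mono)
    then have "measure_pmf.expectation (p i) (\<lambda>v. (g i v)\<^sup>2) \<le> measure_pmf.expectation (p i) (\<lambda>_. M\<^sup>2)"
      by (intro integral_mono) (auto simp: integrable_measure_pmf_finite)
    then show ?thesis
      by simp
  qed
  then have "sqrt (\<Sum>i\<in>A. measure_pmf.expectation (p i) (\<lambda>v. (g i v)\<^sup>2)) \<le> sqrt (card A * M\<^sup>2)"
    by (intro real_sqrt_le_mono sum_bounded_above) simp
  also have "\<dots> = M * sqrt (card A)"
    using \<open>0 \<le> M\<close> by (simp add: real_sqrt_mult)
  finally show ?thesis
    using expectation_abs_centered_sum_Pi_pmf_le[OF assms(1)] order.trans by blast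
qed simp

lemma sqrt_sum_le_sum_sqrt:
  fixes f :: "'a \<Rightarrow> real"
  assumes "\<And>i. i \<in> A \<Longrightarrow> 0 \<le> f i"
  shows "sqrt (\<Sum>i\<in>A. f i) \<le> (\<Sum>i\<in>A. sqrt (f i))"
proof -
  have "sqrt (\<Sum>i\<in>A. f i) = L2_set (\<lambda>i. sqrt (f i)) A"
    using assms unfolding L2_set_def by (simp cong: sum.cong)
  also have "\<dots> \<le> (\<Sum>i\<in>A. sqrt (f i))"
    using assms by (intro L2_set_le_sum) simp
  finally show ?thesis .
qed

lemma sum_sqrt_le_sqrt_card_mult_sqrt_sum:
  fixes f :: "'a \<Rightarrow> real"
  assumes "\<And>i. i \<in> A \<Longrightarrow> 0 \<le> f i"
  shows "(\<Sum>i\<in>A. sqrt (f i)) \<le> sqrt (card A) * sqrt (\<Sum>i\<in>A. f i)"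
proof -
  have "L2_set (\<lambda>i. sqrt (f i)) A = sqrt (\<Sum>i\<in>A. f i)"
    using assms unfolding L2_set_def by (simp cong: sum.cong)
  then show ?thesis
    using L2_set_mult_ineq[of "\<lambda>_. 1" "\<lambda>i. sqrt (f i)" A] assms
    by (simp add: L2_set_constant cong: sum.cong)
qed

lemma agents_eq_image_Sigma: "agents K N = (\<lambda>(k, j). (j, k)) ` (SIGMA k:{1..K}. {1..N k})"
  unfolding agents_def by (auto simp: image_iff)

lemma finite_agents: "finite (agents K N)"
  unfolding agents_eq_image_Sigma by auto

lemma sum_agents: "(\<Sum>q\<in>agents K N. f q) = (\<Sum>k=1..K. \<Sum>j=1..N k. f (j, k))"
proof -
  have "inj_on (\<lambda>(k, j). (j, k)) (SIGMA k:{1..K}. {1..N k})"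
    by (auto simp: inj_on_def)
  then have "(\<Sum>q\<in>agents K N. f q) = (\<Sum>(k, j)\<in>(SIGMA k:{1..K}. {1..N k}). f (j, k))"
    unfolding agents_eq_image_Sigma by (simp add: sum.reindex case_prod_unfold)
  also have "\<dots> = (\<Sum>k=1..K. \<Sum>j=1..N k. f (j, k))"
    by (rule sum.Sigma[symmetric]) auto
  finally show ?thesis .
qed

lemma card_agents: "card (agents K N) = Npop K N"
  using sum_agents[of "\<lambda>_. 1 :: nat" K N] by (simp add: Npop_def)

lemma sum_agents_class:
  assumes "k \<in> {1..K}"
  shows "(\<Sum>q\<in>agents K N. if snd q = k then f q else 0) = (\<Sum>j=1..N k. f (j, k))"
proof -
  have "(\<Sum>q\<in>agents K N. if snd q = k then f q else 0)
      = (\<Sum>k'=1..K. if k' = k then (\<Sum>j=1..N k'. f (j, k')) else 0)"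
    unfolding sum_agents by (intro sum.cong refl) auto
  then show ?thesis
    using assms by simp
qed

lemma Npop_gt_0:
  assumes "K \<ge> 1" and "\<And>k. k \<in> {1..K} \<Longrightarrow> N k \<ge> 1"
  shows "Npop K N > 0"
  using assms member_le_sum[of 1 "{1..K}" N] unfolding Npop_def by fastforce

lemma sum_emp_mult:
  fixes s :: "nat \<times> nat \<Rightarrow> 'a::finite"
  assumes "k \<in> {1..K}"
  shows "(\<Sum>x\<in>UNIV. emp K N s x k * h x) = (\<Sum>j=1..N k. h (s (j, k))) / real (Npop K N)"
proof -
  have "real (card {j \<in> {1..N k}. s (j, k) = x}) * h x = (\<Sum>j=1..N k. if s (j, k) = x then h x else 0)" for x
    by (simp add: sum.If_cases Int_def conj_commute)
  then have "(\<Sum>x\<in>UNIV. emp K N s x k * h x)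
      = (\<Sum>x\<in>UNIV. \<Sum>j=1..N k. if s (j, k) = x then h x else 0) / real (Npop K N)"
    using assms by (simp add: emp_def sum_divide_distrib)
  also have "\<dots> = (\<Sum>j=1..N k. h (s (j, k))) / real (Npop K N)"
    by (subst sum.swap) simp
  finally show ?thesis .
qed

lemma is_dist_emp:
  fixes s :: "nat \<times> nat \<Rightarrow> 'a::finite"
  assumes "Npop K N > 0"
  shows "is_dist K (emp K N s)"
proof -
  have "(\<Sum>a\<in>UNIV. \<Sum>k=1..K. emp K N s a k) = (\<Sum>k=1..K. \<Sum>a\<in>UNIV. emp K N s a k * 1)"
    by (subst sum.swap) simp
  also have "\<dots> = (\<Sum>k=1..K. real (N k) / real (Npop K N))"
    by (intro sum.cong refl) (subst sum_emp_mult, auto)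
  also have "\<dots> = real (Npop K N) / real (Npop K N)"
    by (simp add: Npop_def flip: sum_divide_distrib)
  also have "\<dots> = 1"
    using assms by simp
  finally show ?thesis
    unfolding is_dist_def by (auto simp: emp_def)
qed

lemma is_dist_nu_MF:
  assumes "is_dist K mu"
  shows "is_dist K (nu_MF mu pit)"
proof -
  have "(\<Sum>u\<in>UNIV. \<Sum>k=1..K. nu_MF mu pit u k) = (\<Sum>k=1..K. \<Sum>x\<in>UNIV. mu x k * (\<Sum>u\<in>UNIV. pmf (pit k x mu) u))"
    unfolding nu_MF_def sum_distrib_left
    by (subst sum.swap, rule sum.cong, simp, subst sum.swap) (simp add: mult.commute)
  also have "\<dots> = 1"
    using assms unfolding is_dist_def by (subst sum.swap) (simp add: sum_pmf_eq_1)
  finally show ?thesis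
    using assms unfolding is_dist_def nu_MF_def by (auto intro!: sum_nonneg)
qed

lemma nu_MF_emp:
  assumes "k \<in> {1..K}"
  shows "nu_MF (emp K N s) pit u k = (\<Sum>j=1..N k. pmf (pit k (s (j, k)) (emp K N s)) u) / real (Npop K N)"
  using sum_emp_mult[OF assms, where s = s and h = "\<lambda>x. pmf (pit k x (emp K N s)) u"]
  by (simp add: nu_MF_def mult.commute)

lemma sum_r_MF_emp:
  fixes K :: nat and N :: "nat \<Rightarrow> nat" and s :: "nat \<times> nat \<Rightarrow> 'x::finite"
    and r :: "nat \<Rightarrow> 'x \<Rightarrow> 'u::finite \<Rightarrow> ('x \<Rightarrow> nat \<Rightarrow> real) \<Rightarrow> ('u \<Rightarrow> nat \<Rightarrow> real) \<Rightarrow> real"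
  defines "mu \<equiv> emp K N s"
  shows "(\<Sum>k=1..K. r_MF r k mu pit)
       = (\<Sum>q\<in>agents K N. measure_pmf.expectation (pit (snd q) (s q) mu)
            (\<lambda>u. r (snd q) (s q) u mu (nu_MF mu pit))) / real (Npop K N)"
proof -
  have "r_MF r k mu pit = (\<Sum>j=1..N k. measure_pmf.expectation (pit k (s (j, k)) mu)
            (\<lambda>u. r k (s (j, k)) u mu (nu_MF mu pit))) / real (Npop K N)" if "k \<in> {1..K}" for k
    using sum_emp_mult[OF that, where s = s and N = N
        and h = "\<lambda>x. measure_pmf.expectation (pit k x mu) (\<lambda>u. r k x u mu (nu_MF mu pit))"]
    unfolding r_MF_def mu_def
    by (simp add: expectation_eq_sum_UNIV sum_distrib_left mult_ac)
  then show ?thesis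
    by (simp add: sum_agents sum_divide_distrib)
qed

lemma expectation_abs_emp_deviation_le:
  fixes p :: "nat \<times> nat \<Rightarrow> 'u::finite pmf"
  assumes k: "k \<in> {1..K}"
  shows "measure_pmf.expectation (Pi_pmf (agents K N) d p)
           (\<lambda>a. \<bar>emp K N a u k - (\<Sum>j=1..N k. pmf (p (j, k)) u) / real (Npop K N)\<bar>)
       \<le> sqrt (\<Sum>j=1..N k. pmf (p (j, k)) u) / real (Npop K N)"
proof -
  define h where "h q v = (if snd q = k \<and> v = u then 1 else 0 :: real)" for q :: "nat \<times> nat" and v
  have expectation_h: "measure_pmf.expectation (p q) (h q) = (if snd q = k then pmf (p q) u else 0)" for q
    by (simp add: expectation_eq_sum_UNIV h_def if_distrib[of "\<lambda>x. x * _"] cong: if_cong)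
  have expectation_h_square: "measure_pmf.expectation (p q) (\<lambda>v. (h q v)\<^sup>2) = measure_pmf.expectation (p q) (h q)" for q
    by (rule Bochner_Integration.integral_cong) (simp_all add: h_def)
  have emp_eq: "emp K N a u k = (\<Sum>q\<in>agents K N. h q (a q)) / real (Npop K N)" for a :: "nat \<times> nat \<Rightarrow> 'u"
  proof -
    have "(\<Sum>q\<in>agents K N. h q (a q)) = (\<Sum>q\<in>agents K N. if snd q = k then (if a q = u then 1 else 0) else 0)"
      by (intro sum.cong) (auto simp: h_def)
    also have "\<dots> = real (card {j \<in> {1..N k}. a (j, k) = u})"
      using k by (simp add: sum_agents_class sum.If_cases Int_def conj_commute)
    finally show ?thesis
      using k by (simp add: emp_def)
  qed
  have mean_eq: "(\<Sum>j=1..N k. pmf (p (j, k)) u) = (\<Sum>q\<in>agents K N. measure_pmf.expectation (p q) (h q))"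
    using k by (simp add: expectation_h sum_agents_class)
  have "measure_pmf.expectation (Pi_pmf (agents K N) d p)
          (\<lambda>a. \<bar>emp K N a u k - (\<Sum>j=1..N k. pmf (p (j, k)) u) / real (Npop K N)\<bar>)
      = measure_pmf.expectation (Pi_pmf (agents K N) d p)
          (\<lambda>a. \<bar>\<Sum>q\<in>agents K N. h q (a q) - measure_pmf.expectation (p q) (h q)\<bar>) / real (Npop K N)"
    unfolding emp_eq mean_eq by (simp add: sum_subtractf flip: diff_divide_distrib)
  also have "\<dots> \<le> sqrt (\<Sum>q\<in>agents K N. measure_pmf.expectation (p q) (\<lambda>v. (h q v)\<^sup>2)) / real (Npop K N)"
    by (intro divide_right_mono expectation_abs_centered_sum_Pi_pmf_le finite_agents) simp
  also have "\<dots> = sqrt (\<Sum>j=1..N k. pmf (p (j, k)) u) / real (Npop K N)"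
    using k by (simp add: expectation_h_square expectation_h sum_agents_class)
  finally show ?thesis .
qed

lemma expectation_dist1_emp_le:
  fixes p :: "nat \<times> nat \<Rightarrow> 'u::finite pmf"
  shows "measure_pmf.expectation (Pi_pmf (agents K N) d p)
           (\<lambda>a. dist1 K (emp K N a) (\<lambda>u k. (\<Sum>j=1..N k. pmf (p (j, k)) u) / real (Npop K N)))
       \<le> sqrt CARD('u) * (\<Sum>k=1..K. sqrt (N k)) / real (Npop K N)"
proof -
  let ?m = "\<lambda>u k. \<Sum>j=1..N k. pmf (p (j, k)) u"
  have "measure_pmf.expectation (Pi_pmf (agents K N) d p)
          (\<lambda>a. dist1 K (emp K N a) (\<lambda>u k. ?m u k / real (Npop K N)))
      = (\<Sum>u\<in>UNIV. \<Sum>k=1..K. measure_pmf.expectation (Pi_pmf (agents K N) d p)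
          (\<lambda>a. \<bar>emp K N a u k - ?m u k / real (Npop K N)\<bar>))"
    unfolding dist1_def
    by (simp add: Bochner_Integration.integral_sum integrable_measure_pmf_finite finite_set_Pi_pmf finite_agents)
  also have "\<dots> \<le> (\<Sum>u\<in>UNIV. \<Sum>k=1..K. sqrt (?m u k) / real (Npop K N))"
    by (intro sum_mono expectation_abs_emp_deviation_le) simp
  also have "\<dots> = (\<Sum>k=1..K. \<Sum>u\<in>UNIV. sqrt (?m u k)) / real (Npop K N)"
    by (subst sum.swap) (simp add: sum_divide_distrib)
  also have "\<dots> \<le> (\<Sum>k=1..K. sqrt CARD('u) * sqrt (N k)) / real (Npop K N)"
  proof (intro divide_right_mono sum_mono)
    fix k
    have "(\<Sum>u\<in>UNIV. ?m u k) = real (N k)"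
      by (subst sum.swap) (simp add: sum_pmf_eq_1)
    then show "(\<Sum>u\<in>UNIV. sqrt (?m u k)) \<le> sqrt CARD('u) * sqrt (N k)"
      using sum_sqrt_le_sqrt_card_mult_sqrt_sum[of UNIV "\<lambda>u. ?m u k"] by (simp add: sum_nonneg)
  qed simp
  finally show ?thesis
    by (simp add: sum_distrib_left)
qed

definition reward_gap ::
  "nat \<Rightarrow> (nat \<Rightarrow> nat) \<Rightarrow> (nat \<Rightarrow> 'x::finite \<Rightarrow> 'u::finite \<Rightarrow> ('x \<Rightarrow> nat \<Rightarrow> real) \<Rightarrow> ('u \<Rightarrow> nat \<Rightarrow> real) \<Rightarrow> real)
   \<Rightarrow> (nat \<Rightarrow> 'x \<Rightarrow> ('x \<Rightarrow> nat \<Rightarrow> real) \<Rightarrow> 'u pmf) \<Rightarrow> (nat \<times> nat \<Rightarrow> 'x) \<Rightarrow> (nat \<times> nat \<Rightarrow> 'u) \<Rightarrow> real"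
  where "reward_gap K N r pit s a = \<bar>(1 / real (Npop K N)) * (\<Sum>k=1..K. \<Sum>j=1..N k.
            r k (s (j, k)) (a (j, k)) (emp K N s) (emp K N a))
          - (\<Sum>k=1..K. r_MF r k (emp K N s) pit)\<bar>"

lemma reward_gap_le:
  fixes K :: nat and N :: "nat \<Rightarrow> nat" and s :: "nat \<times> nat \<Rightarrow> 'x::finite"
    and r :: "nat \<Rightarrow> 'x \<Rightarrow> 'u::finite \<Rightarrow> ('x \<Rightarrow> nat \<Rightarrow> real) \<Rightarrow> ('u \<Rightarrow> nat \<Rightarrow> real) \<Rightarrow> real"
    and pit :: "nat \<Rightarrow> 'x \<Rightarrow> ('x \<Rightarrow> nat \<Rightarrow> real) \<Rightarrow> 'u pmf"
  defines "mu \<equiv> emp K N s"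
  defines "nu \<equiv> nu_MF mu pit"
  defines "g \<equiv> \<lambda>q u. r (snd q) (s q) u mu nu"
  defines "p \<equiv> \<lambda>q. pit (snd q) (s q) mu"
  assumes Npop: "Npop K N > 0"
    and r_lip: "\<And>k x u mu1 nu1 mu2 nu2. k \<in> {1..K} \<Longrightarrow>
        is_dist K mu1 \<Longrightarrow> is_dist K nu1 \<Longrightarrow> is_dist K mu2 \<Longrightarrow> is_dist K nu2 \<Longrightarrow>
        \<bar>r k x u mu1 nu1 - r k x u mu2 nu2\<bar> \<le> L_R * (dist1 K mu1 mu2 + dist1 K nu1 nu2)"
  shows "reward_gap K N r pit s a \<le> L_R * dist1 K (emp K N a) nu
           + \<bar>\<Sum>q\<in>agents K N. g q (a q) - measure_pmf.expectation (p q) (g q)\<bar> / real (Npop K N)"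
proof -
  define R where "R q = r (snd q) (s q) (a q) mu (emp K N a)" for q
  have dist_mu: "is_dist K mu" and dist_nu: "is_dist K nu" and dist_emp: "is_dist K (emp K N a)"
    unfolding mu_def nu_def using Npop by (simp_all add: is_dist_emp is_dist_nu_MF)
  have "\<bar>R q - g q (a q)\<bar> \<le> L_R * dist1 K (emp K N a) nu" if "q \<in> agents K N" for q
    using that r_lip[OF _ dist_mu dist_emp dist_mu dist_nu, of "snd q" "s q" "a q"]
    by (auto simp: R_def g_def dist1_def agents_def)
  then have R_bound: "(\<Sum>q\<in>agents K N. \<bar>R q - g q (a q)\<bar>) \<le> real (Npop K N) * (L_R * dist1 K (emp K N a) nu)"
    using sum_bounded_above[of "agents K N" "\<lambda>q. \<bar>R q - g q (a q)\<bar>"] by (simp add: card_agents)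
  have "reward_gap K N r pit s a
      = \<bar>(\<Sum>q\<in>agents K N. R q - g q (a q)) + (\<Sum>q\<in>agents K N. g q (a q) - measure_pmf.expectation (p q) (g q))\<bar>
        / real (Npop K N)"
    unfolding reward_gap_def sum_r_MF_emp
    by (simp add: R_def g_def p_def mu_def nu_def sum_agents sum_subtractf flip: diff_divide_distrib)
  also have "\<dots> \<le> ((\<Sum>q\<in>agents K N. \<bar>R q - g q (a q)\<bar>)
      + \<bar>\<Sum>q\<in>agents K N. g q (a q) - measure_pmf.expectation (p q) (g q)\<bar>) / real (Npop K N)"
    by (intro divide_right_mono order.trans[OF abs_triangle_ineq] add_right_mono sum_abs) simp
  also have "\<dots> \<le> (real (Npop K N) * (L_R * dist1 K (emp K N a) nu)
      + \<bar>\<Sum>q\<in>agents K N. g q (a q) - measure_pmf.expectation (p q) (g q)\<bar>) / real (Npop K N)"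
    by (intro divide_right_mono add_right_mono R_bound) simp
  finally show ?thesis
    using Npop by (simp add: add_divide_distrib)
qed

lemma action_law_eq:
  "action_law K N pol t s = Pi_pmf (agents K N) undefined (\<lambda>q. pol t (snd q) (s q) (emp K N s))"
  by (simp add: action_law_def case_prod_unfold)

lemma finite_set_action_law:
  fixes pol :: "nat \<Rightarrow> nat \<Rightarrow> 'x \<Rightarrow> ('x \<Rightarrow> nat \<Rightarrow> real) \<Rightarrow> 'u::finite pmf"
  shows "finite (set_pmf (action_law K N pol t s))"
  unfolding action_law_eq by (intro finite_set_Pi_pmf finite_agents)

lemma expectation_dist1_emp_nu_MF_le:
  fixes pol :: "nat \<Rightarrow> nat \<Rightarrow> 'x::finite \<Rightarrow> ('x \<Rightarrow> nat \<Rightarrow> real) \<Rightarrow> 'u::finite pmf"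
  shows "measure_pmf.expectation (action_law K N pol t s)
           (\<lambda>a. dist1 K (emp K N a) (nu_MF (emp K N s) (pol t)))
       \<le> sqrt CARD('u) * (\<Sum>k=1..K. sqrt (N k)) / real (Npop K N)"
proof -
  have "dist1 K (emp K N a) (nu_MF (emp K N s) (pol t))
      = dist1 K (emp K N a) (\<lambda>u k. (\<Sum>j=1..N k. pmf (pol t k (s (j, k)) (emp K N s)) u) / real (Npop K N))"
    for a :: "nat \<times> nat \<Rightarrow> 'u"
    unfolding dist1_def by (intro sum.cong refl) (simp add: nu_MF_emp)
  then show ?thesis
    using expectation_dist1_emp_le[of K N undefined "\<lambda>q. pol t (snd q) (s q) (emp K N s)"]
    unfolding action_law_eq by simp
qed

lemma sqrt_Npop_le_sum_sqrt: "sqrt (Npop K N) \<le> (\<Sum>k=1..K. sqrt (N k))"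
  unfolding Npop_def by (simp add: sqrt_sum_le_sum_sqrt)

lemma expectation_reward_gap_action_law_le:
  fixes r :: "nat \<Rightarrow> 'x::finite \<Rightarrow> 'u::finite \<Rightarrow> ('x \<Rightarrow> nat \<Rightarrow> real) \<Rightarrow> ('u \<Rightarrow> nat \<Rightarrow> real) \<Rightarrow> real"
    and pol :: "nat \<Rightarrow> nat \<Rightarrow> 'x \<Rightarrow> ('x \<Rightarrow> nat \<Rightarrow> real) \<Rightarrow> 'u pmf"
  assumes K: "K \<ge> 1" and Npos: "\<And>k. k \<in> {1..K} \<Longrightarrow> N k \<ge> 1"
    and MR: "0 \<le> M_R" and LR: "0 \<le> L_R"
    and r_bound: "\<And>k x u mu nu. k \<in> {1..K} \<Longrightarrow> is_dist K mu \<Longrightarrow> is_dist K nu \<Longrightarrow>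
        \<bar>r k x u mu nu\<bar> \<le> M_R"
    and r_lip: "\<And>k x u mu1 nu1 mu2 nu2. k \<in> {1..K} \<Longrightarrow>
        is_dist K mu1 \<Longrightarrow> is_dist K nu1 \<Longrightarrow> is_dist K mu2 \<Longrightarrow> is_dist K nu2 \<Longrightarrow>
        \<bar>r k x u mu1 nu1 - r k x u mu2 nu2\<bar> \<le> L_R * (dist1 K mu1 mu2 + dist1 K nu1 nu2)"
  shows "measure_pmf.expectation (action_law K N pol t s) (reward_gap K N r (pol t) s)
       \<le> (M_R + L_R) * sqrt CARD('u) * (1 / real (Npop K N)) * (\<Sum>k=1..K. sqrt (N k))"
proof -
  define mu where "mu = emp K N s"
  define nu where "nu = nu_MF mu (pol t)"
  define p where "p = (\<lambda>q. pol t (snd q) (s q) mu)"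
  define g where "g = (\<lambda>q u. r (snd q) (s q) u mu nu)"
  define S where "S = (\<Sum>k=1..K. sqrt (N k))"
  let ?E = "measure_pmf.expectation (action_law K N pol t s)"
  let ?fluctuation = "\<lambda>a. \<bar>\<Sum>q\<in>agents K N. g q (a q) - measure_pmf.expectation (p q) (g q)\<bar>"
  have Npop: "Npop K N > 0"
    using K Npos by (rule Npop_gt_0)
  have integrable: "integrable (measure_pmf (action_law K N pol t s)) f" for f :: "_ \<Rightarrow> real"
    by (intro integrable_measure_pmf_finite finite_set_action_law)
  have E_dist: "?E (\<lambda>a. dist1 K (emp K N a) nu) \<le> sqrt CARD('u) * S / real (Npop K N)"
    unfolding nu_def mu_def S_def by (rule expectation_dist1_emp_nu_MF_le)
  have "is_dist K mu" "is_dist K nu"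
    unfolding nu_def mu_def using Npop by (simp_all add: is_dist_emp is_dist_nu_MF)
  then have "\<bar>g q v\<bar> \<le> M_R" if "q \<in> agents K N" for q v
    using that r_bound by (auto simp: g_def agents_def)
  then have "?E ?fluctuation \<le> M_R * sqrt (Npop K N)"
    unfolding action_law_eq p_def mu_def card_agents[symmetric]
    by (intro expectation_abs_centered_sum_Pi_pmf_bounded finite_agents)
  also have "\<dots> \<le> M_R * (sqrt CARD('u) * S)"
  proof (intro mult_left_mono MR)
    have "S \<le> sqrt CARD('u) * S"
      using mult_right_mono[of 1 "sqrt CARD('u)" S] by (simp add: S_def sum_nonneg)
    then show "sqrt (Npop K N) \<le> sqrt CARD('u) * S"
      using sqrt_Npop_le_sum_sqrt[of K N] unfolding S_def by linarith
  qed
  finally have E_fluctuation: "?E ?fluctuation \<le> M_R * (sqrt CARD('u) * S)" .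
  have "?E (reward_gap K N r (pol t) s)
      \<le> ?E (\<lambda>a. L_R * dist1 K (emp K N a) nu + ?fluctuation a / real (Npop K N))"
    using reward_gap_le[where r = r and pit = "pol t" and s = s, OF Npop r_lip]
    by (intro integral_mono integrable) (simp add: mu_def nu_def g_def p_def)
  also have "\<dots> = L_R * ?E (\<lambda>a. dist1 K (emp K N a) nu) + ?E ?fluctuation / real (Npop K N)"
    by (simp add: integrable)
  also have "\<dots> \<le> L_R * (sqrt CARD('u) * S / real (Npop K N)) + M_R * (sqrt CARD('u) * S) / real (Npop K N)"
    by (intro add_mono mult_left_mono divide_right_mono E_dist E_fluctuation LR) simp
  also have "\<dots> = (M_R + L_R) * sqrt CARD('u) * (1 / real (Npop K N)) * S"
    using Npop by (simp add: field_simps)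
  finally show ?thesis
    unfolding S_def .
qed

lemma expectation_bind_pmf_Pair_le:
  fixes f :: "'a \<Rightarrow> 'b \<Rightarrow> real"
  assumes nonneg: "\<And>x y. 0 \<le> f x y"
    and integrable: "\<And>x. x \<in> set_pmf M \<Longrightarrow> integrable (measure_pmf (Q x)) (f x)"
    and bound: "\<And>x. x \<in> set_pmf M \<Longrightarrow> measure_pmf.expectation (Q x) (f x) \<le> C"
  shows "measure_pmf.expectation (bind_pmf M (\<lambda>x. map_pmf (\<lambda>y. (x, y)) (Q x))) (\<lambda>(x, y). f x y) \<le> C"
proof -
  obtain x0 where "x0 \<in> set_pmf M"
    using set_pmf_not_empty[of M] by blast
  moreover have "0 \<le> measure_pmf.expectation (Q x0) (f x0)"
    by (simp add: nonneg)
  ultimately have "0 \<le> C"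
    using bound by (meson order.trans)
  have inner: "(\<integral>\<^sup>+y. f x y \<partial>Q x) \<le> ennreal C" if "x \<in> set_pmf M" for x
    using bound[OF that] by (simp add: nn_integral_eq_integral integrable[OF that] nonneg ennreal_leI)
  have "(\<integral>\<^sup>+z. (case z of (x, y) \<Rightarrow> f x y) \<partial>bind_pmf M (\<lambda>x. map_pmf (\<lambda>y. (x, y)) (Q x)))
      = (\<integral>\<^sup>+x. (\<integral>\<^sup>+y. f x y \<partial>Q x) \<partial>M)"
    by simp
  also have "\<dots> \<le> (\<integral>\<^sup>+x. ennreal C \<partial>M)"
    using inner by (intro nn_integral_mono_AE) (simp add: AE_measure_pmf_iff)
  finally show ?thesis
    using \<open>0 \<le> C\<close> by (simp add: integral_eq_nn_integral nonneg case_prod_unfold enn2real_leI)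
qed

theorem lemma7:
  fixes K :: nat and N :: "nat \<Rightarrow> nat"
    and r :: "nat \<Rightarrow> 'x::finite \<Rightarrow> 'u::finite \<Rightarrow> ('x \<Rightarrow> nat \<Rightarrow> real) \<Rightarrow> ('u \<Rightarrow> nat \<Rightarrow> real) \<Rightarrow> real"
    and P :: "nat \<Rightarrow> 'x \<Rightarrow> 'u \<Rightarrow> ('x \<Rightarrow> nat \<Rightarrow> real) \<Rightarrow> ('u \<Rightarrow> nat \<Rightarrow> real) \<Rightarrow> 'x pmf"
    and pol :: "nat \<Rightarrow> nat \<Rightarrow> 'x \<Rightarrow> ('x \<Rightarrow> nat \<Rightarrow> real) \<Rightarrow> 'u pmf"
    and init :: "(nat \<times> nat \<Rightarrow> 'x) pmf"
    and M_R L_R L_P :: real and t :: nat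
  assumes K: "K \<ge> 1"
    and Npos: "\<And>k. k \<in> {1..K} \<Longrightarrow> N k \<ge> 1"
    and MR: "M_R > 0" and LR: "L_R > 0" and LP: "L_P > 0"
    and r_bound: "\<And>k x u mu nu. k \<in> {1..K} \<Longrightarrow> is_dist K mu \<Longrightarrow> is_dist K nu \<Longrightarrow>
        \<bar>r k x u mu nu\<bar> \<le> M_R"
    and r_lip: "\<And>k x u mu1 nu1 mu2 nu2. k \<in> {1..K} \<Longrightarrow>
        is_dist K mu1 \<Longrightarrow> is_dist K nu1 \<Longrightarrow> is_dist K mu2 \<Longrightarrow> is_dist K nu2 \<Longrightarrow>
        \<bar>r k x u mu1 nu1 - r k x u mu2 nu2\<bar> \<le> L_R * (dist1 K mu1 mu2 + dist1 K nu1 nu2)"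
    and P_lip: "\<And>k x u mu1 nu1 mu2 nu2. k \<in> {1..K} \<Longrightarrow>
        is_dist K mu1 \<Longrightarrow> is_dist K nu1 \<Longrightarrow> is_dist K mu2 \<Longrightarrow> is_dist K nu2 \<Longrightarrow>
        pmf_dist1 (P k x u mu1 nu1) (P k x u mu2 nu2) \<le> L_P * (dist1 K mu1 mu2 + dist1 K nu1 nu2)"
  shows "measure_pmf.expectation (sa_law K N pol P init t)
           (\<lambda>(s, a). \<bar>(1 / real (Npop K N)) * (\<Sum>k=1..K. \<Sum>j=1..N k.
                r k (s (j, k)) (a (j, k)) (emp K N s) (emp K N a))
              - (\<Sum>k=1..K. r_MF r k (emp K N s) (pol t))\<bar>)
         \<le> (M_R + L_R) * sqrt (real CARD('u)) * (1 / real (Npop K N))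
             * (\<Sum>k=1..K. sqrt (real (N k)))"
proof -
  have "measure_pmf.expectation (sa_law K N pol P init t) (\<lambda>(s, a). reward_gap K N r (pol t) s a)
      \<le> (M_R + L_R) * sqrt CARD('u) * (1 / real (Npop K N)) * (\<Sum>k=1..K. sqrt (N k))"
    unfolding sa_law_def
  proof (rule expectation_bind_pmf_Pair_le)
    show "0 \<le> reward_gap K N r (pol t) s a" for s a
      unfolding reward_gap_def by (rule abs_ge_zero)
    show "integrable (measure_pmf (action_law K N pol t s)) (reward_gap K N r (pol t) s)" for s
      by (intro integrable_measure_pmf_finite finite_set_action_law)
    show "measure_pmf.expectation (action_law K N pol t s) (reward_gap K N r (pol t) s)
        \<le> (M_R + L_R) * sqrt CARD('u) * (1 / real (Npop K N)) * (\<Sum>k=1..K. sqrt (N k))" for s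
      using MR LR by (intro expectation_reward_gap_action_law_le[OF K Npos _ _ r_bound r_lip]) simp_all
  qed
  then show ?thesis
    unfolding reward_gap_def .
qed

end
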